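(* There is an absolute constant $c>0$ such that for every $n\ge 1$ and every algorithm $M$ for uniform facility location that outputs the set of chosen facilities and is $1$-differentially private with respect to the demand set, there exists an instance (a metric space $(V,d)$ on $n$ points, a facility cost $f>0$, and a demand set $D\subseteq V$) on which $\mathbb{E}[\mathrm{cost}(M)]\ge c\sqrt n\cdot\mathrm{OPT}$.
   Context: Uniform facility location: given a metric $(V,d)$, a uniform facility opening cost $f$, and a private demand set $D\subseteq V$, a solution is a nonempty set $F\subseteq V$ of facilities with cost $\sum_{v\in D}\min_{u\in F}d(v,u)+f\,|F|$; $\mathrm{OPT}$ is the minimum cost. $M$ is $1$-differentially private if, for fixed $(V,d,f)$, for all demand sets $D,D'$ with symmetric difference one and all sets $\mathcal{O}$ of outputs, $\Pr[M(D)\in\mathcal{O}]\le e\cdot\Pr[M(D')\in\mathcal{O}]$. *)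

theory Defs
  imports "HOL-Probability.Probability"
begin

text \<open>Points of an n-point metric space are the naturals {..<n}.\<close>

definition is_metric_on :: "nat set \<Rightarrow> (nat \<Rightarrow> nat \<Rightarrow> real) \<Rightarrow> bool" where
  "is_metric_on V d \<longleftrightarrow>
     (\<forall>x\<in>V. d x x = 0) \<and>
     (\<forall>x\<in>V. \<forall>y\<in>V. x \<noteq> y \<longrightarrow> d x y > 0) \<and>
     (\<forall>x\<in>V. \<forall>y\<in>V. d x y = d y x) \<and>
     (\<forall>x\<in>V. \<forall>y\<in>V. \<forall>z\<in>V. d x z \<le> d x y + d y z)"

definition feasible_sols :: "nat set \<Rightarrow> nat set set" where
  "feasible_sols V = {F. F \<noteq> {} \<and> F \<subseteq> V}"

definition ufl_cost :: "(nat \<Rightarrow> nat \<Rightarrow> real) \<Rightarrow> real \<Rightarrow> nat set \<Rightarrow> nat set \<Rightarrow> real" where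
  "ufl_cost d f D F = (\<Sum>v\<in>D. Min (d v ` F)) + f * real (card F)"

definition ufl_OPT :: "nat set \<Rightarrow> (nat \<Rightarrow> nat \<Rightarrow> real) \<Rightarrow> real \<Rightarrow> nat set \<Rightarrow> real" where
  "ufl_OPT V d f D = Min (ufl_cost d f D ` feasible_sols V)"

definition diff_private :: "real \<Rightarrow> nat set \<Rightarrow> (nat set \<Rightarrow> 'b pmf) \<Rightarrow> bool" where
  "diff_private \<epsilon> V M \<longleftrightarrow>
     (\<forall>D D' S. D \<subseteq> V \<longrightarrow> D' \<subseteq> V \<longrightarrow> card ((D - D') \<union> (D' - D)) = 1 \<longrightarrow>
        measure_pmf.prob (M D) S \<le> exp \<epsilon> * measure_pmf.prob (M D') S)"

end

theory Submission
  imports Defs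
begin

text \<open>Use the uniform metric on \<open>n\<close> points and \<open>f = 1/n\<close>, so that \<open>OPT \<le> f\<close> for the
  empty demand set and for every singleton demand set. If, with no demand, every point is
  opened with probability at least \<open>1/(2e)\<close>, the expected cost is at least \<open>n f/(2e)\<close>.
  Otherwise some point \<open>v\<close> is opened with probability below \<open>1/(2e)\<close>; by privacy it is
  opened with probability below \<open>1/2\<close> for the demand set \<open>{v}\<close>, and then \<open>v\<close> pays distance
  \<open>1\<close> with probability above \<open>1/2\<close>. In both cases the cost exceeds \<open>OPT\<close> by a factor
  \<open>n/(2e) \<ge> \<surd>n/(2e)\<close>.\<close>

lemma sqrt_le_self:
  fixes x :: real
  assumes "1 \<le> x"
  shows "sqrt x \<le> x"
proof -
  have "sqrt x * 1 \<le> sqrt x * sqrt x"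
    using assms by (intro mult_left_mono) auto
  then show ?thesis
    using assms by simp
qed

definition uniform_metric :: "nat \<Rightarrow> nat \<Rightarrow> real" where
  "uniform_metric x y = (if x = y then 0 else 1)"

lemma is_metric_on_uniform_metric: "is_metric_on V uniform_metric"
  unfolding is_metric_on_def uniform_metric_def by auto

lemma finite_feasible_sols: "finite V \<Longrightarrow> finite (feasible_sols V)"
  by (rule finite_subset[of _ "Pow V"]) (auto simp: feasible_sols_def)

lemma ufl_OPT_le:
  assumes "finite V" "F \<in> feasible_sols V"
  shows "ufl_OPT V d f D \<le> ufl_cost d f D F"
  unfolding ufl_OPT_def using finite_feasible_sols[OF assms(1)] assms(2) by (intro Min_le) auto

lemma ufl_OPT_nonneg:
  assumes "is_metric_on V d" "finite V" "V \<noteq> {}" "f \<ge> 0" "D \<subseteq> V"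
  shows "ufl_OPT V d f D \<ge> 0"
  unfolding ufl_OPT_def
proof (subst Min_ge_iff)
  obtain v where "v \<in> V" using assms(3) by blast
  then show "ufl_cost d f D ` feasible_sols V \<noteq> {}"
    by (auto simp: feasible_sols_def)
  have "0 \<le> ufl_cost d f D F" if "F \<in> feasible_sols V" for F
  proof -
    have F: "F \<noteq> {}" "F \<subseteq> V" "finite F"
      using that assms(2) by (auto simp: feasible_sols_def intro: finite_subset)
    have "d u w \<ge> 0" if "u \<in> V" "w \<in> V" for u w
      using assms(1) that unfolding is_metric_on_def by (metis order.refl order_less_imp_le)
    then have "0 \<le> Min (d u ` F)" if "u \<in> D" for u
      using F that assms(5) by (subst Min_ge_iff) auto
    then show ?thesis
      using assms(4) by (simp add: ufl_cost_def sum_nonneg)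
  qed
  then show "\<forall>c\<in>ufl_cost d f D ` feasible_sols V. 0 \<le> c"
    by blast
qed (use finite_feasible_sols[OF assms(2)] in auto)

lemma ufl_OPT_le_facility_cost:
  assumes "is_metric_on V d" "finite V" "v \<in> V" "D \<subseteq> {v}"
  shows "ufl_OPT V d f D \<le> f"
proof -
  have "ufl_cost d f D {v} = f"
    using assms(1,3,4) by (auto simp: ufl_cost_def is_metric_on_def subset_singleton_iff)
  then show ?thesis
    using ufl_OPT_le[OF assms(2), of "{v}" d f D] assms(3) by (simp add: feasible_sols_def)
qed

lemma expectation_card_eq_sum_prob:
  assumes "finite V" "set_pmf P \<subseteq> Pow V"
  shows "measure_pmf.expectation P (\<lambda>F. real (card F)) = (\<Sum>v\<in>V. measure_pmf.prob P {F. v \<in> F})"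
proof -
  have fin: "finite (set_pmf P)"
    using assms by (meson finite_Pow_iff finite_subset)
  have card: "real (card F) = (\<Sum>v\<in>V. indicator {F. v \<in> F} F)" if "F \<in> set_pmf P" for F
  proof -
    have "F \<subseteq> V" using that assms(2) by auto
    then have "V \<inter> F = F" by auto
    then show ?thesis
      using sum.inter_restrict[OF assms(1), of "\<lambda>_. 1::real" F] by (simp add: indicator_def of_bool_def)
  qed
  have "measure_pmf.expectation P (\<lambda>F. real (card F))
      = measure_pmf.expectation P (\<lambda>F. \<Sum>v\<in>V. indicator {F. v \<in> F} F)"
    using card by (intro integral_cong_AE) (auto simp: AE_measure_pmf_iff)
  also have "\<dots> = (\<Sum>v\<in>V. measure_pmf.expectation P (indicator {F. v \<in> F}))"
    using fin by (intro Bochner_Integration.integral_sum integrable_measure_pmf_finite)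
  finally show ?thesis by simp
qed

lemma expectation_ufl_cost_empty_demand:
  assumes "finite V" "set_pmf P \<subseteq> Pow V"
  shows "measure_pmf.expectation P (ufl_cost d f {}) = f * (\<Sum>v\<in>V. measure_pmf.prob P {F. v \<in> F})"
proof -
  have "ufl_cost d f {} = (\<lambda>F. f * real (card F))"
    by (simp add: fun_eq_iff ufl_cost_def)
  then show ?thesis
    using expectation_card_eq_sum_prob[OF assms] by simp
qed

lemma expectation_ufl_cost_uniform_singleton_ge:
  assumes "finite V" "set_pmf P \<subseteq> feasible_sols V" "f \<ge> 0"
  shows "1 - measure_pmf.prob P {F. v \<in> F} \<le> measure_pmf.expectation P (ufl_cost uniform_metric f {v})"
proof -
  have fin: "finite (set_pmf P)"
    using assms(2) finite_feasible_sols[OF assms(1)] by (rule finite_subset)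
  have pointwise: "indicator {F. v \<notin> F} F \<le> ufl_cost uniform_metric f {v} F"
    if "F \<in> set_pmf P" for F
  proof -
    have "F \<noteq> {}" "finite F"
      using that assms(1,2) by (auto simp: feasible_sols_def intro: finite_subset)
    then have "Min (uniform_metric v ` F) \<ge> indicator {F. v \<notin> F} F"
      by (subst Min_ge_iff) (auto simp: uniform_metric_def)
    moreover have "0 \<le> f * real (card F)"
      using assms(3) by simp
    ultimately show ?thesis by (simp add: ufl_cost_def)
  qed
  have "1 - measure_pmf.prob P {F. v \<in> F} = measure_pmf.prob P {F. v \<notin> F}"
    using measure_pmf.prob_compl[of "{F. v \<in> F}" P] by (simp add: Compl_eq_Diff_UNIV[symmetric] Collect_neg_eq)
  also have "\<dots> = measure_pmf.expectation P (indicator {F. v \<notin> F})"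
    by simp
  also have "\<dots> \<le> measure_pmf.expectation P (ufl_cost uniform_metric f {v})"
    using fin pointwise
    by (intro integral_mono_AE integrable_measure_pmf_finite) (auto simp: AE_measure_pmf_iff)
  finally show ?thesis .
qed

lemma diff_private_ratio_lower_bound:
  fixes M :: "nat set \<Rightarrow> nat set pmf"
  assumes "n \<ge> 1"
    and support: "\<And>D. D \<subseteq> {..<n} \<Longrightarrow> set_pmf (M D) \<subseteq> feasible_sols {..<n}"
    and privacy: "diff_private 1 {..<n} M"
  shows "\<exists>D\<subseteq>{..<n}. real n / (2 * exp 1) * ufl_OPT {..<n} uniform_metric (1 / n) D
                   \<le> measure_pmf.expectation (M D) (ufl_cost uniform_metric (1 / n) D)"
proof -
  define f :: real where "f = 1 / n"
  define c :: real where "c = 1 / (2 * exp 1)"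
  define p where "p v = measure_pmf.prob (M {}) {F. v \<in> F}" for v
  have "f > 0" "real n * f = 1" "c > 0" "c \<le> 1 / 2"
    using assms(1) by (simp_all add: f_def c_def frac_le)
  have OPT: "real n / (2 * exp 1) * ufl_OPT {..<n} uniform_metric f D \<le> c"
    if "v < n" "D \<subseteq> {v}" for v D
  proof -
    have "ufl_OPT {..<n} uniform_metric f D \<le> f"
      using that by (intro ufl_OPT_le_facility_cost is_metric_on_uniform_metric) auto
    then have "real n * c * ufl_OPT {..<n} uniform_metric f D \<le> real n * c * f"
      using \<open>c > 0\<close> by (intro mult_left_mono) auto
    then show ?thesis
      using \<open>real n * f = 1\<close> by (simp add: c_def)
  qed
  consider (dense) "\<forall>v<n. c \<le> p v" | (sparse) v where "v < n" "p v < c"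
    using not_less by blast
  then show ?thesis
  proof cases
    case dense
    have "c = f * (\<Sum>v<n. c)"
      using \<open>real n * f = 1\<close> by (simp add: mult.commute)
    also have "\<dots> \<le> f * (\<Sum>v<n. p v)"
      using dense \<open>f > 0\<close> by (intro mult_left_mono sum_mono) auto
    also have "\<dots> = measure_pmf.expectation (M {}) (ufl_cost uniform_metric f {})"
      unfolding p_def using support[of "{}"]
      by (intro expectation_ufl_cost_empty_demand[symmetric]) (auto simp: feasible_sols_def)
    finally show ?thesis
      using OPT[of 0 "{}"] assms(1) f_def by force
  next
    case sparse
    have "measure_pmf.prob (M {v}) {F. v \<in> F} \<le> exp 1 * p v"
      using privacy sparse(1) unfolding diff_private_def p_def by simp
    also have "\<dots> \<le> exp 1 * c"
      using sparse(2) by simp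
    finally have "1 / 2 \<le> 1 - measure_pmf.prob (M {v}) {F. v \<in> F}"
      by (simp add: c_def)
    also have "\<dots> \<le> measure_pmf.expectation (M {v}) (ufl_cost uniform_metric f {v})"
      using support[of "{v}"] sparse(1) \<open>f > 0\<close>
      by (intro expectation_ufl_cost_uniform_singleton_ge) auto
    finally have "c \<le> measure_pmf.expectation (M {v}) (ufl_cost uniform_metric f {v})"
      using \<open>c \<le> 1 / 2\<close> by linarith
    then show ?thesis
      using OPT[of v "{v}"] sparse(1) f_def by force
  qed
qed

theorem mainTheorem5:
  "\<exists>c::real. c > 0 \<and>
    (\<forall>(n::nat) (M :: (nat \<Rightarrow> nat \<Rightarrow> real) \<Rightarrow> real \<Rightarrow> nat set \<Rightarrow> nat set pmf).
       n \<ge> 1 \<longrightarrow>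
       (\<forall>d f D. is_metric_on {..<n} d \<longrightarrow> f > 0 \<longrightarrow> D \<subseteq> {..<n} \<longrightarrow>
           set_pmf (M d f D) \<subseteq> feasible_sols {..<n}) \<longrightarrow>
       (\<forall>d f. is_metric_on {..<n} d \<longrightarrow> f > 0 \<longrightarrow> diff_private 1 {..<n} (M d f)) \<longrightarrow>
       (\<exists>d f D. is_metric_on {..<n} d \<and> f > 0 \<and> D \<subseteq> {..<n} \<and>
          measure_pmf.expectation (M d f D) (ufl_cost d f D)
            \<ge> c * sqrt (real n) * ufl_OPT {..<n} d f D))"
proof (intro exI[of _ "1 / (2 * exp 1)"] conjI allI impI)
  show "(0::real) < 1 / (2 * exp 1)" by simp
  fix n :: nat and M :: "(nat \<Rightarrow> nat \<Rightarrow> real) \<Rightarrow> real \<Rightarrow> nat set \<Rightarrow> nat set pmf"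
  assume "n \<ge> 1"
    and support: "\<forall>d f D. is_metric_on {..<n} d \<longrightarrow> f > 0 \<longrightarrow> D \<subseteq> {..<n} \<longrightarrow>
                    set_pmf (M d f D) \<subseteq> feasible_sols {..<n}"
    and privacy: "\<forall>d f. is_metric_on {..<n} d \<longrightarrow> f > 0 \<longrightarrow> diff_private 1 {..<n} (M d f)"
  let ?d = uniform_metric and ?f = "1 / real n"
  have "?f > 0" using \<open>n \<ge> 1\<close> by simp
  obtain D where D: "D \<subseteq> {..<n}"
    and bound: "real n / (2 * exp 1) * ufl_OPT {..<n} ?d ?f D \<le> measure_pmf.expectation (M ?d ?f D) (ufl_cost ?d ?f D)"
    using diff_private_ratio_lower_bound[OF \<open>n \<ge> 1\<close>, of "M ?d ?f"] support privacy
      is_metric_on_uniform_metric \<open>?f > 0\<close> by blast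
  have "ufl_OPT {..<n} ?d ?f D \<ge> 0"
    using \<open>n \<ge> 1\<close> D by (intro ufl_OPT_nonneg is_metric_on_uniform_metric) (auto simp: lessThan_empty_iff)
  then have "1 / (2 * exp 1) * sqrt (real n) * ufl_OPT {..<n} ?d ?f D
               \<le> real n / (2 * exp 1) * ufl_OPT {..<n} ?d ?f D"
    using sqrt_le_self[of "real n"] \<open>n \<ge> 1\<close>
    by (intro mult_right_mono) (simp_all add: divide_right_mono)
  also note bound
  finally show "\<exists>d f D. is_metric_on {..<n} d \<and> f > 0 \<and> D \<subseteq> {..<n} \<and>
                 measure_pmf.expectation (M d f D) (ufl_cost d f D)
                   \<ge> 1 / (2 * exp 1) * sqrt (real n) * ufl_OPT {..<n} d f D"
    using D is_metric_on_uniform_metric \<open>?f > 0\<close> by blast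
qed

end
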